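(* There exist five nonzero vectors $\{\phi_i\}_{i=1}^5$ in $\mathbb R^3$ which fail to do phase retrieval, but whose induced hyperplanes $\{\phi_i^\perp\}_{i=1}^5$ do phase retrieval on $\mathbb R^3$.
   Context: A family of vectors $\{\phi_i\}$ in $\mathbb R^d$ does phase retrieval if $|\langle x,\phi_i\rangle|=|\langle y,\phi_i\rangle|$ for all $i$ implies $x=\pm y$. A family of subspaces $\{W_i\}$ with orthogonal projections $P_i$ does phase retrieval if $\|P_ix\|=\|P_iy\|$ for all $i$ implies $x=\pm y$. Here $\phi_i^\perp=\{x\in\mathbb R^3:\langle x,\phi_i\rangle=0\}$. *)

theory Defs
  imports "HOL-Analysis.Analysis"
begin

definition vec_phase_retrieval :: "'i set \<Rightarrow> ('i \<Rightarrow> 'a::real_inner) \<Rightarrow> bool" where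
  "vec_phase_retrieval I \<phi> \<longleftrightarrow>
     (\<forall>x y. (\<forall>i\<in>I. \<bar>x \<bullet> \<phi> i\<bar> = \<bar>y \<bullet> \<phi> i\<bar>) \<longrightarrow> x = y \<or> x = - y)"

definition orth_proj :: "'a::euclidean_space set \<Rightarrow> 'a \<Rightarrow> 'a" where
  "orth_proj W x = (THE p. p \<in> W \<and> (\<forall>w\<in>W. (x - p) \<bullet> w = 0))"

definition subspace_phase_retrieval :: "'i set \<Rightarrow> ('i \<Rightarrow> 'a::euclidean_space set) \<Rightarrow> bool" where
  "subspace_phase_retrieval I W \<longleftrightarrow>
     (\<forall>x y. (\<forall>i\<in>I. norm (orth_proj (W i) x) = norm (orth_proj (W i) y)) \<longrightarrow> x = y \<or> x = - y)"

definition perp_hyperplane :: "'a::real_inner \<Rightarrow> 'a set" where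
  "perp_hyperplane v = {x. x \<bullet> v = 0}"

end

theory Submission
  imports Defs
begin

text \<open>The vectors (2,\<plusminus>1,0), (0,0,1), (2,\<plusminus>1,1) cannot distinguish (1,0,0) from (0,2,0).
  For the projection P onto \<open>\<phi>\<^sup>\<bottom>\<close>, \<open>\<parallel>P x\<parallel>\<^sup>2 = \<parallel>x\<parallel>\<^sup>2 - \<langle>x,\<phi>\<rangle>\<^sup>2/\<parallel>\<phi>\<parallel>\<^sup>2\<close>, so equal projection norms
  say that the symmetric matrix \<open>D = x x\<^sup>T - y y\<^sup>T\<close> satisfies \<open>\<phi>\<^sup>T D \<phi> = \<parallel>\<phi>\<parallel>\<^sup>2 tr D\<close>
  for each of the five vectors. These linear conditions force D to be a multiple of diag(5,-5,3);
  but D has rank at most 2, so its determinant vanishes, hence D = 0, i.e. x = \<plusminus>y.\<close>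

definition outer_diff :: "real^'n \<Rightarrow> real^'n \<Rightarrow> real^'n^'n" where
  "outer_diff x y = (\<chi> i j. x$i * x$j - y$i * y$j)"

lemma transpose_outer_diff: "transpose (outer_diff x y) = outer_diff x y"
  by (simp add: outer_diff_def transpose_def vec_eq_iff mult.commute)

lemma trace_outer_diff: "trace (outer_diff x y) = x \<bullet> x - y \<bullet> y"
  by (simp add: trace_def outer_diff_def inner_vec_def sum_subtractf)

lemma inner_outer_diff: "v \<bullet> (outer_diff x y *v v) = (x \<bullet> v)\<^sup>2 - (y \<bullet> v)\<^sup>2"
proof -
  have "(x \<bullet> v)\<^sup>2 = (\<Sum>i\<in>UNIV. \<Sum>j\<in>UNIV. v$i * (x$i * x$j) * v$j)"
    by (simp add: inner_vec_def power2_eq_square sum_product mult_ac)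
  moreover have "(y \<bullet> v)\<^sup>2 = (\<Sum>i\<in>UNIV. \<Sum>j\<in>UNIV. v$i * (y$i * y$j) * v$j)"
    by (simp add: inner_vec_def power2_eq_square sum_product mult_ac)
  ultimately show ?thesis
    by (simp add: outer_diff_def inner_vec_def matrix_vector_mult_def sum_distrib_left
        sum_subtractf right_diff_distrib left_diff_distrib mult_ac)
qed

lemma eq_or_eq_neg_of_products_eq:
  fixes x y :: "real^'n"
  assumes prod: "\<And>i j. x$i * x$j = y$i * y$j"
  shows "x = y \<or> x = - y"
proof (cases "x = 0")
  case True
  have "y$i = 0" for i
    using prod[of i i] True by simp
  then show ?thesis
    using True by (simp add: vec_eq_iff)
next
  case False
  then obtain k where xk: "x$k \<noteq> 0"
    by (auto simp: vec_eq_iff)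
  from prod[of k k] have "y$k = x$k \<or> y$k = - x$k"
    by (metis square_eq_iff)
  then show ?thesis
  proof
    assume "y$k = x$k"
    then have "y$j = x$j" for j
      using prod[of k j] xk by simp
    then show ?thesis by (simp add: vec_eq_iff)
  next
    assume "y$k = - x$k"
    then have "x$k * x$j = x$k * (- y$j)" for j
      using prod[of k j] by simp
    then have "y$j = - x$j" for j
      using xk mult_cancel_left by (metis minus_equation_iff)
    then show ?thesis by (simp add: vec_eq_iff)
  qed
qed

lemma outer_diff_eq_0_iff: "outer_diff x y = 0 \<longleftrightarrow> x = y \<or> x = - y"
proof
  assume "outer_diff x y = 0"
  then have "x$i * x$j = y$i * y$j" for i j
    by (simp add: outer_diff_def vec_eq_iff)
  then show "x = y \<or> x = - y"
    by (rule eq_or_eq_neg_of_products_eq)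
qed (auto simp: outer_diff_def vec_eq_iff)

lemma det_outer_diff_3: "det (outer_diff x y :: real^3^3) = 0"
  unfolding det_3 by (simp add: outer_diff_def) algebra

lemma orth_proj_perp_hyperplane:
  fixes v x :: "'a::euclidean_space"
  assumes "v \<noteq> 0"
  shows "orth_proj (perp_hyperplane v) x = x - ((x \<bullet> v) / (v \<bullet> v)) *\<^sub>R v"
  unfolding orth_proj_def
proof (rule the_equality)
  let ?q = "x - ((x \<bullet> v) / (v \<bullet> v)) *\<^sub>R v"
  have q: "?q \<in> perp_hyperplane v" "\<forall>w\<in>perp_hyperplane v. (x - ?q) \<bullet> w = 0"
    using assms by (auto simp: perp_hyperplane_def inner_diff_left inner_diff_right inner_commute)
  then show "?q \<in> perp_hyperplane v \<and> (\<forall>w\<in>perp_hyperplane v. (x - ?q) \<bullet> w = 0)" ..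
  fix p assume p: "p \<in> perp_hyperplane v \<and> (\<forall>w\<in>perp_hyperplane v. (x - p) \<bullet> w = 0)"
  have "p - ?q \<in> perp_hyperplane v"
    using p q(1) by (auto simp: perp_hyperplane_def inner_diff_left)
  with p q(2) have "(x - p) \<bullet> (p - ?q) = 0" "(x - ?q) \<bullet> (p - ?q) = 0" by auto
  then have "(p - ?q) \<bullet> (p - ?q) = 0" by (simp add: inner_diff_left)
  then show "p = ?q" by simp
qed

lemma norm_orth_proj_perp_hyperplane_sq:
  fixes v x :: "'a::euclidean_space"
  assumes "v \<noteq> 0"
  shows "(norm (orth_proj (perp_hyperplane v) x))\<^sup>2 = x \<bullet> x - (x \<bullet> v)\<^sup>2 / (v \<bullet> v)"
  using assms unfolding orth_proj_perp_hyperplane[OF assms] power2_norm_eq_inner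
  by (simp add: inner_diff_left inner_diff_right inner_commute power2_eq_square field_simps)

lemma norm_orth_proj_perp_hyperplane_eq_iff:
  fixes v x y :: "real^'n"
  assumes "v \<noteq> 0"
  shows "norm (orth_proj (perp_hyperplane v) x) = norm (orth_proj (perp_hyperplane v) y) \<longleftrightarrow>
    v \<bullet> (outer_diff x y *v v) = (v \<bullet> v) * trace (outer_diff x y)"
proof -
  have "v \<bullet> v \<noteq> 0" using assms by simp
  then have "x \<bullet> x - (x \<bullet> v)\<^sup>2 / (v \<bullet> v) = y \<bullet> y - (y \<bullet> v)\<^sup>2 / (v \<bullet> v) \<longleftrightarrow>
      (x \<bullet> v)\<^sup>2 - (y \<bullet> v)\<^sup>2 = (v \<bullet> v) * (x \<bullet> x - y \<bullet> y)"
    by (simp add: field_simps) (auto simp: algebra_simps)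
  then show ?thesis
    by (simp add: power2_eq_iff_nonneg[symmetric] norm_orth_proj_perp_hyperplane_sq[OF assms]
        inner_outer_diff trace_outer_diff)
qed

definition frame5 :: "nat \<Rightarrow> real^3" where
  "frame5 i = (if i = 1 then vector [2, 1, 0] else if i = 2 then vector [2, -1, 0]
     else if i = 3 then vector [0, 0, 1] else if i = 4 then vector [2, 1, 1] else vector [2, -1, 1])"

lemma frame5_nonzero: "frame5 i \<noteq> 0"
  by (auto simp: frame5_def vec_eq_iff forall_3)

lemma frame5_not_vec_phase_retrieval: "\<not> vec_phase_retrieval {1..5} frame5"
proof -
  let ?x = "vector [1, 0, 0] :: real^3" and ?y = "vector [0, 2, 0] :: real^3"
  have "\<bar>?x \<bullet> frame5 i\<bar> = \<bar>?y \<bullet> frame5 i\<bar>" for i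
    by (simp add: frame5_def inner_vec_def sum_3)
  moreover have "?x \<noteq> ?y" "?x \<noteq> - ?y"
    by (auto simp: vec_eq_iff forall_3)
  ultimately show ?thesis
    unfolding vec_phase_retrieval_def by blast
qed

lemma symmetric_det_zero_frame5_conditions_imp_zero:
  fixes D :: "real^3^3"
  assumes "transpose D = D" and "det D = 0"
    and "\<forall>i\<in>{1..5}. frame5 i \<bullet> (D *v frame5 i) = (frame5 i \<bullet> frame5 i) * trace D"
  shows "D = 0"
proof -
  have sym: "D$2$1 = D$1$2" "D$3$1 = D$1$3" "D$3$2 = D$2$3"
    using assms(1) by (auto simp: transpose_def vec_eq_iff)
  have "frame5 i \<bullet> (D *v frame5 i) = (frame5 i \<bullet> frame5 i) * trace D" if "i \<in> {1..5}" for i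
    using assms(3) that by blast
  from this[of 1] this[of 2] this[of 3] this[of 4] this[of 5]
  have eqs: "5 * (D$1$1 + D$2$2 + D$3$3) = 4 * D$1$1 + D$2$2 + 4 * D$1$2"
    "5 * (D$1$1 + D$2$2 + D$3$3) = 4 * D$1$1 + D$2$2 - 4 * D$1$2"
    "D$1$1 + D$2$2 = 0"
    "6 * (D$1$1 + D$2$2 + D$3$3) = 4 * D$1$1 + D$2$2 + D$3$3 + 4 * D$1$2 + 4 * D$1$3 + 2 * D$2$3"
    "6 * (D$1$1 + D$2$2 + D$3$3) = 4 * D$1$1 + D$2$2 + D$3$3 - 4 * D$1$2 + 4 * D$1$3 - 2 * D$2$3"
    by (simp_all add: frame5_def inner_vec_def matrix_vector_mult_def trace_def sum_3 sym
        algebra_simps)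
  have entries: "D$1$2 = 0" "D$1$3 = 0" "D$2$3 = 0" "D$2$2 = - D$1$1" "5 * D$3$3 = 3 * D$1$1"
    using eqs by (simp_all add: algebra_simps)
  have "det D = - (3/5) * D$1$1 ^ 3"
    unfolding det_3 using entries sym by (simp add: power3_eq_cube algebra_simps)
  with assms(2) have "D$1$1 = 0" by simp
  with entries sym show "D = 0"
    by (auto simp: vec_eq_iff forall_3)
qed

lemma frame5_hyperplanes_subspace_phase_retrieval:
  "subspace_phase_retrieval {1..5} (\<lambda>i. perp_hyperplane (frame5 i))"
  unfolding subspace_phase_retrieval_def
proof (intro allI impI)
  fix x y :: "real^3"
  assume "\<forall>i\<in>{1..5}. norm (orth_proj (perp_hyperplane (frame5 i)) x) =
                       norm (orth_proj (perp_hyperplane (frame5 i)) y)"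
  then have "\<forall>i\<in>{1..5}. frame5 i \<bullet> (outer_diff x y *v frame5 i) =
                          (frame5 i \<bullet> frame5 i) * trace (outer_diff x y)"
    by (simp add: norm_orth_proj_perp_hyperplane_eq_iff[OF frame5_nonzero])
  then have "outer_diff x y = 0"
    by (rule symmetric_det_zero_frame5_conditions_imp_zero[OF transpose_outer_diff det_outer_diff_3])
  then show "x = y \<or> x = - y"
    by (simp add: outer_diff_eq_0_iff)
qed

theorem mainTheorem6:
  shows "\<exists>\<phi> :: nat \<Rightarrow> real^3.
           (\<forall>i\<in>{1..5}. \<phi> i \<noteq> 0) \<and>
           \<not> vec_phase_retrieval {1..5} \<phi> \<and>
           subspace_phase_retrieval {1..5} (\<lambda>i. perp_hyperplane (\<phi> i))"
  using frame5_nonzero frame5_not_vec_phase_retrieval frame5_hyperplanes_subspace_phase_retrieval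
  by blast

end
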